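(* Let $\Gamma_3^*\subseteq\mathbb{R}^7$ be the set of entropy vectors of triples of discrete random variables. Let $\mathbf{e}_1=[1,0,0,1,1,0,1]^\intercal$, $\mathbf{e}_2=[0,1,0,1,0,1,1]^\intercal$, $\mathbf{e}_3=[0,0,1,0,1,1,1]^\intercal$, $\mathbf{e}_{12}=[1,1,0,1,1,1,1]^\intercal$, $\mathbf{e}_{123'}=[1,1,1,2,2,2,2]^\intercal$, and let $\Omega=\mathrm{cone}(\mathbf{e}_1,\mathbf{e}_2,\mathbf{e}_3,\mathbf{e}_{12},\mathbf{e}_{123'})$ be the set of all nonnegative combinations of these vectors. Let $\Omega^{\mathrm{in}}$ be the set of all vectors $\lambda_1\mathbf{e}_1+\lambda_2\mathbf{e}_2+\lambda_3\mathbf{e}_3+\lambda_{12}\mathbf{e}_{12}+\lambda_{123'}\mathbf{e}_{123'}$ with all $\lambda_j\ge 0$ such that at least one of the following holds: (i) $\lambda_{12}+\lambda_{123'}\ge\log\lceil 2^{\lambda_{123'}}\rceil$; (ii) $\lambda_{123'}=\log m$ for some $m\in\mathbb{N}$. Then there exists an entropy vector $\mathbf{h}\in\Gamma_3^*$ lying in the relative interior of $\Omega$ (i.e., in $\Omega$ but in no proper face of $\Omega$) such that $\mathbf{h}\notin\Omega^{\mathrm{in}}$.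
   Context: All logarithms are base 2 and entropies are in bits. For a discrete random vector $(X_1,X_2,X_3)$, its entropy vector is $\mathbf{h}=[h_1,h_2,h_3,h_{12},h_{13},h_{23},h_{123}]^\intercal\in\mathbb{R}^7$, where $h_\alpha$ is the Shannon entropy of $(X_i)_{i\in\alpha}$. $\Omega$ is a face of the polymatroid cone $\Gamma_3$ (the set of $\mathbf{h}$ satisfying the Shannon elemental inequalities). *)

theory Defs
  imports "HOL-Analysis.Analysis" "HOL-Probability.Probability_Mass_Function"
begin

definition shannon_entropy :: "'a pmf \<Rightarrow> real" where
  "shannon_entropy q = (\<Sum>x\<in>set_pmf q. - (pmf q x * log 2 (pmf q x)))"

definition entropy_vector :: "('a \<times> 'b \<times> 'c) pmf \<Rightarrow> real ^ 7" where
  "entropy_vector p = vector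
     [shannon_entropy (map_pmf (\<lambda>(x,y,z). x) p),
      shannon_entropy (map_pmf (\<lambda>(x,y,z). y) p),
      shannon_entropy (map_pmf (\<lambda>(x,y,z). z) p),
      shannon_entropy (map_pmf (\<lambda>(x,y,z). (x,y)) p),
      shannon_entropy (map_pmf (\<lambda>(x,y,z). (x,z)) p),
      shannon_entropy (map_pmf (\<lambda>(x,y,z). (y,z)) p),
      shannon_entropy p]"

text \<open>Gamma_3^*: entropy vectors of triples of discrete (finite-alphabet) random variables.
  Alphabets are taken as subsets of nat (every finite alphabet embeds).\<close>
definition Gamma3_star :: "(real ^ 7) set" where
  "Gamma3_star = {entropy_vector p | p :: (nat \<times> nat \<times> nat) pmf. finite (set_pmf p)}"

definition e1 :: "real ^ 7" where "e1 = vector [1,0,0,1,1,0,1]"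
definition e2 :: "real ^ 7" where "e2 = vector [0,1,0,1,0,1,1]"
definition e3 :: "real ^ 7" where "e3 = vector [0,0,1,0,1,1,1]"
definition e12 :: "real ^ 7" where "e12 = vector [1,1,0,1,1,1,1]"
definition e123' :: "real ^ 7" where "e123' = vector [1,1,1,2,2,2,2]"

definition comb :: "real \<Rightarrow> real \<Rightarrow> real \<Rightarrow> real \<Rightarrow> real \<Rightarrow> real ^ 7" where
  "comb l1 l2 l3 l12 l123 = l1 *\<^sub>R e1 + l2 *\<^sub>R e2 + l3 *\<^sub>R e3 + l12 *\<^sub>R e12 + l123 *\<^sub>R e123'"

definition Omega :: "(real ^ 7) set" where
  "Omega = {comb l1 l2 l3 l12 l123 | l1 l2 l3 l12 l123.
              l1 \<ge> 0 \<and> l2 \<ge> 0 \<and> l3 \<ge> 0 \<and> l12 \<ge> 0 \<and> l123 \<ge> 0}"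

definition Omega_in :: "(real ^ 7) set" where
  "Omega_in = {comb l1 l2 l3 l12 l123 | l1 l2 l3 l12 l123.
              l1 \<ge> 0 \<and> l2 \<ge> 0 \<and> l3 \<ge> 0 \<and> l12 \<ge> 0 \<and> l123 \<ge> 0 \<and>
              (l12 + l123 \<ge> log 2 (real_of_int \<lceil>2 powr l123\<rceil>)
               \<or> (\<exists>m::nat. m \<ge> 1 \<and> l123 = log 2 (real m)))}"

end

theory Submission
  imports Defs
begin

text \<open>
  The witness is a distribution on 16 equally likely outcomes whose entropy vector is
  \<open>(3/2) e1 + (1/4) e2 + (1/2) e3 + (1/4) e12 + (1/2) e123'\<close>. The five generators are
  linearly independent, so \<open>\<Omega>\<close> is an injective linear image of the nonnegative orthant of
  \<open>\<real>\<^sup>5\<close>, and its relative interior consists of the combinations with all coefficients positive.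
  The witness lies outside \<open>\<Omega>\<^sup>i\<^sup>n\<close> because its coefficient of \<open>e123'\<close> is \<open>1/2\<close>, which is not
  the logarithm of an integer, and \<open>1/4 + 1/2 < 1 = log \<lceil>2 powr (1/2)\<rceil>\<close>.
\<close>

lemma exhaust_7:
  fixes x :: 7
  shows "x = 1 \<or> x = 2 \<or> x = 3 \<or> x = 4 \<or> x = 5 \<or> x = 6 \<or> x = 7"
proof (induct x)
  case (of_int z)
  then have "z = 0 \<or> z = 1 \<or> z = 2 \<or> z = 3 \<or> z = 4 \<or> z = 5 \<or> z = 6" by fastforce
  then show ?case by auto
qed

lemma forall_7:
  "(\<forall>i::7. P i) \<longleftrightarrow> P 1 \<and> P 2 \<and> P 3 \<and> P 4 \<and> P 5 \<and> P 6 \<and> P 7"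
  by (metis exhaust_7)

lemma vector_7 [simp]:
  "(vector [x1,x2,x3,x4,x5,x6,x7] :: 'a::zero ^ 7) $ 1 = x1"
  "(vector [x1,x2,x3,x4,x5,x6,x7] :: 'a::zero ^ 7) $ 2 = x2"
  "(vector [x1,x2,x3,x4,x5,x6,x7] :: 'a::zero ^ 7) $ 3 = x3"
  "(vector [x1,x2,x3,x4,x5,x6,x7] :: 'a::zero ^ 7) $ 4 = x4"
  "(vector [x1,x2,x3,x4,x5,x6,x7] :: 'a::zero ^ 7) $ 5 = x5"
  "(vector [x1,x2,x3,x4,x5,x6,x7] :: 'a::zero ^ 7) $ 6 = x6"
  "(vector [x1,x2,x3,x4,x5,x6,x7] :: 'a::zero ^ 7) $ 7 = x7"
  unfolding vector_def by simp_all

lemma comb_component [simp]: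
  "comb a b c d e $ 1 = a + d + e"
  "comb a b c d e $ 2 = b + d + e"
  "comb a b c d e $ 3 = c + e"
  "comb a b c d e $ 4 = a + b + d + 2 * e"
  "comb a b c d e $ 5 = a + c + d + 2 * e"
  "comb a b c d e $ 6 = b + c + d + 2 * e"
  "comb a b c d e $ 7 = a + b + c + d + 2 * e"
  by (simp_all add: comb_def e1_def e2_def e3_def e12_def e123'_def)

lemma comb_eq_iff:
  "comb a b c d e = comb a' b' c' d' e' \<longleftrightarrow> a = a' \<and> b = b' \<and> c = c' \<and> d = d' \<and> e = e'"
  by (auto simp: vec_eq_iff forall_7)

definition comb_map :: "real \<times> real \<times> real \<times> real \<times> real \<Rightarrow> real ^ 7" where
  "comb_map = (\<lambda>(a, b, c, d, e). comb a b c d e)"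

lemma linear_comb_map: "linear comb_map"
  by (rule linearI) (auto simp: comb_map_def comb_def algebra_simps)

lemma inj_comb_map: "inj comb_map"
  by (rule injI) (auto simp: comb_map_def comb_eq_iff)

lemma Omega_eq_image: "Omega = comb_map ` ({0..} \<times> {0..} \<times> {0..} \<times> {0..} \<times> {0..})"
proof (intro equalityI subsetI)
  fix h assume "h \<in> Omega"
  then obtain a b c d e where "h = comb a b c d e" "a \<ge> 0" "b \<ge> 0" "c \<ge> 0" "d \<ge> 0" "e \<ge> 0"
    unfolding Omega_def by blast
  then show "h \<in> comb_map ` ({0..} \<times> {0..} \<times> {0..} \<times> {0..} \<times> {0..})"
    by (auto simp: comb_map_def intro!: image_eqI[where x = "(a, b, c, d, e)"])
next
  fix h assume "h \<in> comb_map ` ({0..} \<times> {0..} \<times> {0..} \<times> {0..} \<times> {0..})"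
  then obtain a b c d e where "h = comb a b c d e" "a \<ge> 0" "b \<ge> 0" "c \<ge> 0" "d \<ge> 0" "e \<ge> 0"
    by (auto simp: comb_map_def)
  then show "h \<in> Omega"
    unfolding Omega_def by blast
qed

lemma rel_interior_nonneg_orthant:
  "rel_interior ({0..} \<times> {0..} \<times> {0..} \<times> {0..} \<times> {0..} :: (real \<times> real \<times> real \<times> real \<times> real) set)
     = {0<..} \<times> {0<..} \<times> {0<..} \<times> {0<..} \<times> {0<..}"
proof -
  have int: "interior ({0..} \<times> {0..} \<times> {0..} \<times> {0..} \<times> {0..} :: (real \<times> real \<times> real \<times> real \<times> real) set)
     = {0<..} \<times> {0<..} \<times> {0<..} \<times> {0<..} \<times> {0<..}"
    by (simp add: interior_Times)
  then have "(1, 1, 1, 1, 1) \<in> interior ({0..} \<times> {0..} \<times> {0..} \<times> {0..} \<times> {0..} :: (real \<times> real \<times> real \<times> real \<times> real) set)"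
    by simp
  then show ?thesis
    using rel_interior_nonempty_interior int by blast
qed

lemma rel_interior_Omega:
  "rel_interior Omega = comb_map ` ({0<..} \<times> {0<..} \<times> {0<..} \<times> {0<..} \<times> {0<..})"
  unfolding Omega_eq_image rel_interior_nonneg_orthant[symmetric]
  using linear_comb_map inj_comb_map
  by (simp add: rel_interior_injective_linear_image linear_conv_bounded_linear)

lemma comb_mem_rel_interior_Omega:
  assumes "0 < a" "0 < b" "0 < c" "0 < d" "0 < e"
  shows "comb a b c d e \<in> rel_interior Omega"
  unfolding rel_interior_Omega using assms
  by (auto simp: comb_map_def intro!: image_eqI[where x = "(a, b, c, d, e)"])

lemma comb_mem_Omega_in_iff:
  "comb a b c d e \<in> Omega_in \<longleftrightarrow>
     a \<ge> 0 \<and> b \<ge> 0 \<and> c \<ge> 0 \<and> d \<ge> 0 \<and> e \<ge> 0 \<and>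
     (d + e \<ge> log 2 (real_of_int \<lceil>2 powr e\<rceil>) \<or> (\<exists>m::nat. m \<ge> 1 \<and> e = log 2 (real m)))"
  by (simp add: Omega_in_def comb_eq_iff)

lemma ceiling_two_powr_eq_2:
  fixes x :: real
  assumes "0 < x" "x \<le> 1"
  shows "\<lceil>2 powr x\<rceil> = 2"
proof -
  have "1 < 2 powr x"
    using assms by simp
  moreover have "2 powr x \<le> 2 powr 1"
    using assms by (intro powr_mono) auto
  ultimately show ?thesis
    by (simp add: ceiling_eq_iff)
qed

lemma log2_of_nat_ge_1:
  fixes m :: nat
  assumes "0 < log 2 (real m)"
  shows "1 \<le> log 2 (real m)"
proof -
  have "m \<noteq> 0"
    using assms by (intro notI) (simp add: log_def)
  then have "1 < m"
    using assms by simp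
  then show ?thesis
    by simp
qed

lemma comb_notin_Omega_in:
  assumes "0 < e" "e < 1" "d + e < 1"
  shows "comb a b c d e \<notin> Omega_in"
proof -
  have "d + e < log 2 (real_of_int \<lceil>2 powr e\<rceil>)"
    using assms by (simp add: ceiling_two_powr_eq_2)
  moreover have "e \<noteq> log 2 (real m)" for m :: nat
    using log2_of_nat_ge_1[of m] assms by linarith
  ultimately show ?thesis
    by (auto simp: comb_mem_Omega_in_iff)
qed

lemma map_pmf_of_multiset:
  assumes "M \<noteq> {#}"
  shows "map_pmf f (pmf_of_multiset M) = pmf_of_multiset (image_mset f M)"
proof (rule pmf_eqI)
  fix y
  have "pmf (map_pmf f (pmf_of_multiset M)) y
      = measure_pmf.prob (pmf_of_multiset M) (f -` {y} \<inter> set_mset M)"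
    using assms measure_Int_set_pmf[of "pmf_of_multiset M" "f -` {y}"] by (simp add: pmf_map)
  also have "\<dots> = (\<Sum>x\<in>f -` {y} \<inter> set_mset M. count M x / size M)"
    using assms by (simp add: measure_measure_pmf_finite)
  also have "\<dots> = count (image_mset f M) y / size (image_mset f M)"
    by (simp add: count_image_mset sum_divide_distrib)
  finally show "pmf (map_pmf f (pmf_of_multiset M)) y = pmf (pmf_of_multiset (image_mset f M)) y"
    using assms by simp
qed

lemma shannon_entropy_pmf_of_multiset_mset:
  assumes "ys \<noteq> []"
  shows "shannon_entropy (pmf_of_multiset (mset ys)) =
    (\<Sum>x\<leftarrow>remdups ys. - (count_list ys x / length ys * log 2 (count_list ys x / length ys)))"
  using assms by (simp add: shannon_entropy_def sum.set_conv_list count_mset)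

lemma log2_inverse_powers:
  "log 2 (1/2) = -1" "log 2 (1/4) = -2" "log 2 (1/8) = -3" "log 2 (1/16) = -4"
proof -
  have "log 2 (1 / 2 ^ k) = - real k" for k
    by (simp add: log_divide log_nat_power)
  from this[of 1] this[of 2] this[of 3] this[of 4]
  show "log 2 (1/2) = -1" "log 2 (1/4) = -2" "log 2 (1/8) = -3" "log 2 (1/16) = -4"
    by simp_all
qed

text \<open>\<open>X\<^sub>1\<close> chooses how the two fair bits \<open>X\<^sub>2, X\<^sub>3\<close> are coupled: equal, opposite, \<open>X\<^sub>2 = 0\<close>,
  \<open>X\<^sub>2 = 1\<close> or independent, with probabilities \<open>1/4, 1/4, 1/8, 1/8, 1/4\<close>.\<close>

definition witness_outcomes :: "(nat \<times> nat \<times> nat) list" where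
  "witness_outcomes =
     [(0,0,0), (0,0,0), (0,1,1), (0,1,1), (1,1,0), (1,1,0), (1,0,1), (1,0,1),
      (2,0,0), (2,0,1), (3,1,0), (3,1,1), (4,0,0), (4,0,1), (4,1,0), (4,1,1)]"

definition witness :: "(nat \<times> nat \<times> nat) pmf" where
  "witness = pmf_of_multiset (mset witness_outcomes)"

lemma finite_set_pmf_witness: "finite (set_pmf witness)"
  by (simp add: witness_def witness_outcomes_def)

lemma shannon_entropy_map_witness:
  "shannon_entropy (map_pmf f witness) =
    (\<Sum>x\<leftarrow>remdups (map f witness_outcomes).
       - (count_list (map f witness_outcomes) x / 16 * log 2 (count_list (map f witness_outcomes) x / 16)))"
proof -
  have ne: "witness_outcomes \<noteq> []" and len: "length witness_outcomes = 16"
    by (simp_all add: witness_outcomes_def)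
  then have ne_map: "map f witness_outcomes \<noteq> []"
    by simp
  have map_eq: "map_pmf f witness = pmf_of_multiset (mset (map f witness_outcomes))"
    using ne by (simp add: witness_def map_pmf_of_multiset)
  show ?thesis
    unfolding map_eq shannon_entropy_pmf_of_multiset_mset[OF ne_map] length_map len by simp
qed

lemma entropy_vector_witness:
  "entropy_vector witness = comb (3/2) (1/4) (1/2) (1/4) (1/2)"
proof -
  have "shannon_entropy witness = 7/2"
    using shannon_entropy_map_witness[of "\<lambda>x. x"]
    by (simp add: witness_outcomes_def log2_inverse_powers)
  then show ?thesis
    unfolding entropy_vector_def vec_eq_iff forall_7
    by (simp add: shannon_entropy_map_witness witness_outcomes_def log2_inverse_powers)
qed

theorem theorem5:
  shows "\<exists>h \<in> Gamma3_star. h \<in> rel_interior Omega \<and> h \<notin> Omega_in"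
proof
  show "entropy_vector witness \<in> Gamma3_star"
    unfolding Gamma3_star_def using finite_set_pmf_witness by blast
  show "entropy_vector witness \<in> rel_interior Omega \<and> entropy_vector witness \<notin> Omega_in"
    unfolding entropy_vector_witness
    by (simp add: comb_mem_rel_interior_Omega comb_notin_Omega_in)
qed

end
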